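(* Let $G$ be a finite simple graph with no isolated vertices, and suppose $\mathrm{Aut}(G)$ contains an element $\sigma$ of order $2$ such that $\sigma(v_0)=v_0$ for exactly one vertex $v_0\in V(G)$, and $v\sigma(v)\notin E(G)$ for all $v\in V(G)$. Then $G$ is an $\mathcal{N}$ position for Grim.
   Context: Grim is a two-player game on a finite simple undirected graph. Any isolated vertices of the starting graph are deleted before play begins. Players alternate moves; a move consists of selecting a vertex of the current graph and deleting it together with all its incident edges, after which every vertex that has become isolated is also deleted. The player who makes the last legal move wins (a player facing the empty graph has no move and loses). A graph is an $\mathcal{N}$ position if the player about to move has a winning strategy, and a $\mathcal{P}$ position otherwise. An automorphism of $G$ is a permutation of $V(G)$ preserving adjacency. *)

theory Defs
  imports Main
begin

definition simple_graph :: "'a set \<Rightarrow> ('a \<Rightarrow> 'a \<Rightarrow> bool) \<Rightarrow> bool" where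
  "simple_graph V E \<longleftrightarrow> finite V \<and> (\<forall>u v. E u v \<longrightarrow> E v u) \<and> (\<forall>v. \<not> E v v)
     \<and> (\<forall>u v. E u v \<longrightarrow> u \<in> V \<and> v \<in> V)"

definition no_isolated :: "'a set \<Rightarrow> ('a \<Rightarrow> 'a \<Rightarrow> bool) \<Rightarrow> bool" where
  "no_isolated V E \<longleftrightarrow> (\<forall>v\<in>V. \<exists>w\<in>V. E v w)"

definition automorphism :: "'a set \<Rightarrow> ('a \<Rightarrow> 'a \<Rightarrow> bool) \<Rightarrow> ('a \<Rightarrow> 'a) \<Rightarrow> bool" where
  "automorphism V E \<sigma> \<longleftrightarrow> bij_betw \<sigma> V V \<and> (\<forall>u\<in>V. \<forall>v\<in>V. E u v \<longleftrightarrow> E (\<sigma> u) (\<sigma> v))"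

definition has_order_2 :: "'a set \<Rightarrow> ('a \<Rightarrow> 'a) \<Rightarrow> bool" where
  "has_order_2 V \<sigma> \<longleftrightarrow> (\<forall>v\<in>V. \<sigma> (\<sigma> v) = v) \<and> (\<exists>v\<in>V. \<sigma> v \<noteq> v)"

text \<open>A Grim move: the current graph is the subgraph of E induced on S
  (S containing no isolated vertices). Delete v, then delete all vertices
  that became isolated.\<close>
definition grim_move :: "('a \<Rightarrow> 'a \<Rightarrow> bool) \<Rightarrow> 'a set \<Rightarrow> 'a \<Rightarrow> 'a set" where
  "grim_move E S v = {u \<in> S - {v}. \<exists>w \<in> S - {v}. E u w}"

lemma grim_move_subset: "v \<in> S \<Longrightarrow> grim_move E S v \<subset> S"
  unfolding grim_move_def by auto

function grim_N :: "('a \<Rightarrow> 'a \<Rightarrow> bool) \<Rightarrow> 'a set \<Rightarrow> bool" where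
  "grim_N E S = (if finite S then (\<exists>v\<in>S. \<not> grim_N E (grim_move E S v)) else False)"
  by auto
termination
  by (relation "measure (\<lambda>(E, S). card S)")
     (auto intro!: psubset_card_mono grim_move_subset)

definition grim_N_position :: "'a set \<Rightarrow> ('a \<Rightarrow> 'a \<Rightarrow> bool) \<Rightarrow> bool" where
  "grim_N_position V E \<longleftrightarrow> grim_N E {v \<in> V. \<exists>w\<in>V. E v w}"

end

theory Submission
  imports Defs
begin

text \<open>Mirror strategy. Removing the fixed vertex \<open>v\<^sub>0\<close> leaves a position on which \<open>\<sigma>\<close> acts
  without fixed points; from there the second player answers every move \<open>u\<close> by \<open>\<sigma> u\<close>.
  This reply is always legal, because \<open>\<sigma> u\<close> keeps the mirror image of a neighbour of \<open>u\<close>,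
  which is not \<open>u\<close> itself as \<open>u\<sigma>(u)\<close> is not an edge; and the remaining position is again
  \<open>\<sigma>\<close>-invariant. Hence that position is \<open>\<P>\<close>, and deleting \<open>v\<^sub>0\<close> is a winning first move.\<close>

definition nonisolated_part :: "('a \<Rightarrow> 'a \<Rightarrow> bool) \<Rightarrow> 'a set \<Rightarrow> 'a set" where
  "nonisolated_part E A = {x \<in> A. \<exists>w\<in>A. E x w}"

lemma grim_move_eq_nonisolated_part: "grim_move E S v = nonisolated_part E (S - {v})"
  unfolding grim_move_def nonisolated_part_def ..

lemma nonisolated_part_subset: "nonisolated_part E A \<subseteq> A"
  unfolding nonisolated_part_def by auto

lemma finite_nonisolated_part: "finite A \<Longrightarrow> finite (nonisolated_part E A)"
  using nonisolated_part_subset by (rule finite_subset)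

lemma nonisolated_part_Diff:
  assumes "\<And>u v. E u v \<Longrightarrow> E v u"
  shows "nonisolated_part E (nonisolated_part E A - B) = nonisolated_part E (A - B)"
  using assms unfolding nonisolated_part_def by blast

declare grim_N.simps [simp del]

lemma grim_N_iff: "finite S \<Longrightarrow> grim_N E S \<longleftrightarrow> (\<exists>v\<in>S. \<not> grim_N E (grim_move E S v))"
  by (subst grim_N.simps) simp

lemma grim_N_intro:
  assumes "finite S" "v \<in> S" "\<not> grim_N E (grim_move E S v)"
  shows "grim_N E S"
  using assms by (simp add: grim_N_iff[OF assms(1)]) blast

locale nonadjacent_involution =
  fixes V :: "'a set" and E :: "'a \<Rightarrow> 'a \<Rightarrow> bool" and \<sigma> :: "'a \<Rightarrow> 'a"
  assumes sym: "\<And>u v. E u v \<Longrightarrow> E v u"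
    and edge_in_V: "\<And>u v. E u v \<Longrightarrow> u \<in> V \<and> v \<in> V"
    and maps_V: "\<And>v. v \<in> V \<Longrightarrow> \<sigma> v \<in> V"
    and involutive: "\<And>v. v \<in> V \<Longrightarrow> \<sigma> (\<sigma> v) = v"
    and edge_preserving: "\<And>u v. u \<in> V \<Longrightarrow> v \<in> V \<Longrightarrow> E u v \<Longrightarrow> E (\<sigma> u) (\<sigma> v)"
    and not_adjacent_image: "\<And>v. v \<in> V \<Longrightarrow> \<not> E v (\<sigma> v)"
begin

definition invariant :: "'a set \<Rightarrow> bool" where
  "invariant A \<longleftrightarrow> A \<subseteq> V \<and> (\<forall>x\<in>A. \<sigma> x \<in> A \<and> \<sigma> x \<noteq> x)"

lemma invariant_Diff_orbit:
  assumes "invariant A" "u \<in> A"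
  shows "invariant (A - {u, \<sigma> u})"
proof -
  have "\<sigma> x \<notin> {u, \<sigma> u}" if x: "x \<in> A - {u, \<sigma> u}" for x
  proof -
    have "x \<in> V" "u \<in> V" using x assms unfolding invariant_def by auto
    then have "\<sigma> (\<sigma> x) = x" "\<sigma> (\<sigma> u) = u" using involutive by auto
    then show ?thesis using x by auto
  qed
  then show ?thesis using assms(1) unfolding invariant_def by auto
qed

lemma invariant_Diff_unique_fixed_point:
  assumes "\<sigma> v0 = v0" and "\<And>x. x \<in> V \<Longrightarrow> \<sigma> x = x \<Longrightarrow> x = v0"
  shows "invariant (V - {v0})"
proof -
  have "\<sigma> x \<in> V - {v0} \<and> \<sigma> x \<noteq> x" if x: "x \<in> V - {v0}" for x
  proof -
    have "\<sigma> (\<sigma> x) = x" using x involutive by blast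
    then show ?thesis using x assms maps_V by auto
  qed
  then show ?thesis unfolding invariant_def by blast
qed

lemma mirror_reply_legal:
  assumes "invariant A" "u \<in> nonisolated_part E A"
  shows "\<sigma> u \<in> nonisolated_part E (A - {u})"
proof -
  obtain w where w: "w \<in> A" "E u w" and uA: "u \<in> A"
    using assms(2) unfolding nonisolated_part_def by blast
  have uV: "u \<in> V" and wV: "w \<in> V" using w edge_in_V by auto
  have "\<sigma> w \<noteq> u"
    using w(2) not_adjacent_image[OF uV] involutive[OF wV] by metis
  moreover have "E (\<sigma> u) (\<sigma> w)" using edge_preserving[OF uV wV w(2)] .
  ultimately show ?thesis
    using assms(1) uA w(1) unfolding invariant_def nonisolated_part_def by auto
qed

theorem invariant_not_grim_N:
  assumes "finite A" "invariant A"
  shows "\<not> grim_N E (nonisolated_part E A)"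
  using assms
proof (induction "card A" arbitrary: A rule: less_induct)
  case less
  let ?S = "nonisolated_part E A"
  show ?case
  proof
    assume "grim_N E ?S"
    moreover have "finite ?S" using less.prems(1) by (rule finite_nonisolated_part)
    ultimately obtain u where u: "u \<in> ?S" and "\<not> grim_N E (grim_move E ?S u)"
      using grim_N_iff by blast
    moreover have "grim_move E ?S u = nonisolated_part E (A - {u})"
      by (simp add: grim_move_eq_nonisolated_part nonisolated_part_Diff[OF sym])
    moreover have "grim_N E (nonisolated_part E (A - {u}))"
    proof -
      let ?B = "A - {u, \<sigma> u}"
      have uA: "u \<in> A" using u nonisolated_part_subset by (rule subsetD[rotated])
      have "card ?B < card A"
        using less.prems(1) uA by (intro psubset_card_mono) auto
      moreover have "finite ?B" using less.prems(1) by simp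
      ultimately have "\<not> grim_N E (nonisolated_part E ?B)"
        using invariant_Diff_orbit[OF less.prems(2) uA] by (rule less.hyps)
      moreover have "grim_move E (nonisolated_part E (A - {u})) (\<sigma> u) = nonisolated_part E ?B"
        by (simp add: grim_move_eq_nonisolated_part nonisolated_part_Diff[OF sym] flip: Diff_insert2)
      ultimately have "\<not> grim_N E (grim_move E (nonisolated_part E (A - {u})) (\<sigma> u))"
        by simp
      moreover have "finite (nonisolated_part E (A - {u}))"
        using less.prems(1) by (simp add: finite_nonisolated_part)
      ultimately show ?thesis
        using mirror_reply_legal[OF less.prems(2) u] by (blast intro: grim_N_intro)
    qed
    ultimately show False by simp
  qed
qed

end

lemma nonadjacent_involutionI:
  assumes "simple_graph V E" "automorphism V E \<sigma>" "has_order_2 V \<sigma>" "\<forall>v\<in>V. \<not> E v (\<sigma> v)"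
  shows "nonadjacent_involution V E \<sigma>"
proof
  show "\<And>u v. E u v \<Longrightarrow> E v u" "\<And>u v. E u v \<Longrightarrow> u \<in> V \<and> v \<in> V"
    using assms(1) unfolding simple_graph_def by blast+
  show "\<And>v. v \<in> V \<Longrightarrow> \<sigma> v \<in> V"
    using assms(2) unfolding automorphism_def by (blast dest: bij_betwE)
  show "\<And>u v. u \<in> V \<Longrightarrow> v \<in> V \<Longrightarrow> E u v \<Longrightarrow> E (\<sigma> u) (\<sigma> v)"
    using assms(2) unfolding automorphism_def by blast
  show "\<And>v. v \<in> V \<Longrightarrow> \<sigma> (\<sigma> v) = v"
    using assms(3) unfolding has_order_2_def by blast
  show "\<And>v. v \<in> V \<Longrightarrow> \<not> E v (\<sigma> v)"
    using assms(4) by blast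
qed

lemma grim_N_position_iff_no_isolated:
  assumes "no_isolated V E"
  shows "grim_N_position V E \<longleftrightarrow> grim_N E V"
proof -
  have "{v \<in> V. \<exists>w\<in>V. E v w} = V" using assms unfolding no_isolated_def by blast
  then show ?thesis unfolding grim_N_position_def by simp
qed

theorem corollary4p3:
  fixes V :: "'a set" and E :: "'a \<Rightarrow> 'a \<Rightarrow> bool" and \<sigma> :: "'a \<Rightarrow> 'a"
  assumes "simple_graph V E"
    and "no_isolated V E"
    and "automorphism V E \<sigma>"
    and "has_order_2 V \<sigma>"
    and "\<exists>!v0. v0 \<in> V \<and> \<sigma> v0 = v0"
    and "\<forall>v\<in>V. \<not> E v (\<sigma> v)"
  shows "grim_N_position V E"
proof -
  interpret nonadjacent_involution V E \<sigma>
    using assms(1,3,4,6) by (rule nonadjacent_involutionI)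
  obtain v0 where v0: "v0 \<in> V" "\<sigma> v0 = v0"
    and unique: "\<And>x. x \<in> V \<Longrightarrow> \<sigma> x = x \<Longrightarrow> x = v0"
    using assms(5) by blast
  have fin: "finite V" using assms(1) by (simp add: simple_graph_def)
  have "invariant (V - {v0})" using v0(2) unique by (rule invariant_Diff_unique_fixed_point)
  then have "\<not> grim_N E (grim_move E V v0)"
    using fin invariant_not_grim_N by (simp add: grim_move_eq_nonisolated_part)
  then have "grim_N E V" using fin v0(1) by (rule grim_N_intro[rotated 2])
  then show ?thesis using assms(2) by (simp add: grim_N_position_iff_no_isolated)
qed

end
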